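(* Let $\{\mathcal G,(\Gamma_0,\Gamma_1),(\widetilde\Gamma_0,\widetilde\Gamma_1)\}$ be a quasi boundary triple for the adjoint pair $\{S,\widetilde S\}$ (with cores $T$ of $S^*$ and $\widetilde T$ of $\widetilde S^*$). Then the following are equivalent: (i) $T=S^*$ and $\widetilde T=\widetilde S^*$; (ii) $\operatorname{ran}(\Gamma_0,\Gamma_1)^\top=\mathcal G\times\mathcal G$ and $\operatorname{ran}(\widetilde\Gamma_0,\widetilde\Gamma_1)^\top=\mathcal G\times\mathcal G$.
   Context: Let $\mathfrak H$ be a separable Hilbert space. An adjoint pair $\{S,\widetilde S\}$ consists of densely defined closed operators $S,\widetilde S$ in $\mathfrak H$ with $(Sf,g)=(f,\widetilde Sg)$ for all $f\in\operatorname{dom}S$, $g\in\operatorname{dom}\widetilde S$. Fix operators $T\subset S^*$ and $\widetilde T\subset\widetilde S^*$ which are cores, i.e. $\overline T=S^*$ and $\overline{\widetilde T}=\widetilde S^*$ (equivalently $T^*=S$, $\widetilde T^*=\widetilde S$). A triple $\{\mathcal G,(\Gamma_0,\Gamma_1),(\widetilde\Gamma_0,\widetilde\Gamma_1)\}$ for $\{S,\widetilde S\}$ consists of a Hilbert space $\mathcal G$ and linear maps $\Gamma_0,\Gamma_1:\operatorname{dom}T\to\mathcal G$, $\widetilde\Gamma_0,\widetilde\Gamma_1:\operatorname{dom}\widetilde T\to\mathcal G$. Put $A_0:=T\upharpoonright\ker\Gamma_0$ and $\widetilde A_0:=\widetilde T\upharpoonright\ker\widetilde\Gamma_0$. Conditions: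 (G) $(Tf,g)_{\mathfrak H}-(f,\widetilde Tg)_{\mathfrak H}=(\Gamma_1f,\widetilde\Gamma_0g)_{\mathcal G}-(\Gamma_0f,\widetilde\Gamma_1g)_{\mathcal G}$ for all $f\in\operatorname{dom}T$, $g\in\operatorname{dom}\widetilde T$; (DD) $\operatorname{ran}(\Gamma_0,\Gamma_1)^\top$ and $\operatorname{ran}(\widetilde\Gamma_0,\widetilde\Gamma_1)^\top$ are dense in $\mathcal G\times\mathcal G$; (M) $A_0^*=\widetilde A_0$ and $\widetilde A_0^*=A_0$. A quasi boundary triple is a triple satisfying (G), (DD) and (M). *)

theory Defs
  imports "HOL-Analysis.Analysis"
begin

text \<open>Complex Hilbert spaces, encoded as real Hilbert spaces (real part of the
complex inner product) equipped with an isometric real-linear map iunit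
(multiplication by the imaginary unit) with iunit (iunit x) = - x.\<close>

class chilbert_space = real_inner + complete_space +
  fixes iunit :: "'a \<Rightarrow> 'a"
  assumes iunit_add: "iunit (x + y) = iunit x + iunit y"
    and iunit_scaleR: "iunit (scaleR r x) = scaleR r (iunit x)"
    and iunit_iunit: "iunit (iunit x) = - x"
    and iunit_inner: "inner (iunit x) (iunit y) = inner x y"

definition cscale :: "complex \<Rightarrow> 'a::chilbert_space \<Rightarrow> 'a" where
  "cscale c x = scaleR (Re c) x + scaleR (Im c) (iunit x)"

text \<open>Complex inner product, linear in the first, antilinear in the second argument.\<close>
definition cinner :: "'a::chilbert_space \<Rightarrow> 'a \<Rightarrow> complex" where
  "cinner x y = Complex (inner x y) (inner x (iunit y))"

definition csubspace :: "'a::chilbert_space set \<Rightarrow> bool" where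
  "csubspace D \<longleftrightarrow> 0 \<in> D \<and> (\<forall>x\<in>D. \<forall>y\<in>D. x + y \<in> D) \<and> (\<forall>c. \<forall>x\<in>D. cscale c x \<in> D)"

text \<open>A (complex-)linear map defined on the subspace D (values outside D are irrelevant).\<close>
definition clinear_on :: "'a::chilbert_space set \<Rightarrow> ('a \<Rightarrow> 'b::chilbert_space) \<Rightarrow> bool" where
  "clinear_on D A \<longleftrightarrow> csubspace D \<and> (\<forall>x\<in>D. \<forall>y\<in>D. A (x + y) = A x + A y)
     \<and> (\<forall>c. \<forall>x\<in>D. A (cscale c x) = cscale c (A x))"

text \<open>An operator in H is given by its domain D and its action A on D.\<close>
definition graph :: "'a set \<Rightarrow> ('a \<Rightarrow> 'b) \<Rightarrow> ('a \<times> 'b) set" where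
  "graph D A = {(x, A x) | x. x \<in> D}"

definition linear_operator :: "'a::chilbert_space set \<Rightarrow> ('a \<Rightarrow> 'a) \<Rightarrow> bool" where
  "linear_operator D A \<longleftrightarrow> clinear_on D A"

definition densely_defined :: "'a::chilbert_space set \<Rightarrow> ('a \<Rightarrow> 'a) \<Rightarrow> bool" where
  "densely_defined D A \<longleftrightarrow> linear_operator D A \<and> closure D = UNIV"

definition closed_operator :: "'a::chilbert_space set \<Rightarrow> ('a \<Rightarrow> 'a) \<Rightarrow> bool" where
  "closed_operator D A \<longleftrightarrow> linear_operator D A \<and> closed (graph D A)"

definition adjoint_graph :: "'a::chilbert_space set \<Rightarrow> ('a \<Rightarrow> 'a) \<Rightarrow> ('a \<times> 'a) set" where
  "adjoint_graph D A = {(y, z). \<forall>x\<in>D. cinner (A x) y = cinner x z}"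

definition adjoint_pair :: "'a::chilbert_space set \<Rightarrow> ('a \<Rightarrow> 'a) \<Rightarrow> 'a set \<Rightarrow> ('a \<Rightarrow> 'a) \<Rightarrow> bool" where
  "adjoint_pair dS S dSt St \<longleftrightarrow>
     densely_defined dS S \<and> closed_operator dS S \<and>
     densely_defined dSt St \<and> closed_operator dSt St \<and>
     (\<forall>f\<in>dS. \<forall>g\<in>dSt. cinner (S f) g = cinner f (St g))"

definition core_of_adjoint :: "'a::chilbert_space set \<Rightarrow> ('a \<Rightarrow> 'a) \<Rightarrow> 'a set \<Rightarrow> ('a \<Rightarrow> 'a) \<Rightarrow> bool" where
  "core_of_adjoint dT T dS S \<longleftrightarrow> linear_operator dT T \<and>
     graph dT T \<subseteq> adjoint_graph dS S \<and> closure (graph dT T) = adjoint_graph dS S"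

definition quasi_boundary_triple ::
  "'a::chilbert_space set \<Rightarrow> ('a \<Rightarrow> 'a) \<Rightarrow> 'a set \<Rightarrow> ('a \<Rightarrow> 'a) \<Rightarrow>
   ('a \<Rightarrow> 'g::chilbert_space) \<Rightarrow> ('a \<Rightarrow> 'g) \<Rightarrow> ('a \<Rightarrow> 'g) \<Rightarrow> ('a \<Rightarrow> 'g) \<Rightarrow> bool" where
  "quasi_boundary_triple dT T dTt Tt G0 G1 Gt0 Gt1 \<longleftrightarrow>
     clinear_on dT G0 \<and> clinear_on dT G1 \<and> clinear_on dTt Gt0 \<and> clinear_on dTt Gt1 \<and>
     \<comment> \<open>(G)\<close>
     (\<forall>f\<in>dT. \<forall>g\<in>dTt. cinner (T f) g - cinner f (Tt g)
         = cinner (G1 f) (Gt0 g) - cinner (G0 f) (Gt1 g)) \<and>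
     \<comment> \<open>(DD)\<close>
     closure ((\<lambda>f. (G0 f, G1 f)) ` dT) = UNIV \<and>
     closure ((\<lambda>g. (Gt0 g, Gt1 g)) ` dTt) = UNIV \<and>
     \<comment> \<open>(M): A0 = T restricted to ker G0, At0 = Tt restricted to ker Gt0\<close>
     adjoint_graph {f\<in>dT. G0 f = 0} T = graph {g\<in>dTt. Gt0 g = 0} Tt \<and>
     adjoint_graph {g\<in>dTt. Gt0 g = 0} Tt = graph {f\<in>dT. G0 f = 0} T"

end

theory Submission
  imports Defs
begin

(* Primes stand for the tildes of the paper. Suppose T = S^* and T' = S'^*, and let
   w = lim Gamma f_n be a boundary value. By Green's identity the functionals
   (g, T' g) |-> (T f_n, g) - (f_n, T' g) converge on the closed graph of T', so uniform
   boundedness and the Riesz representation produce a pair (f, f') that satisfies Green's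
   identity against dom T' with boundary value w. Elements of dom S lie in dom T' and have
   boundary value 0 because ran Gamma is dense, so (f, f') is in S^* = T, and density of
   ran Gamma' forces Gamma f = w.
   Conversely, if both boundary maps are onto and (f, f') is in the closure of T, the same
   weak-limit argument in G x G yields a boundary value w = Gamma h; then (f - h, f' - T h)
   satisfies Green's identity with zero boundary values, so by (M) it lies in the graph of T,
   which is therefore closed.
   Each direction is applied to the triple and to its mirror image. Adjoints can be computed
   with real inner products only, since all domains are invariant under multiplication by i. *)

section \<open>Closed subspaces of a real Hilbert space\<close>

lemma parallelogram_law:
  fixes x y :: "'a::real_inner"
  shows "norm (x + y)^2 + norm (x - y)^2 = 2 * norm x^2 + 2 * norm y^2"
  by (simp add: power2_norm_eq_inner inner_add_left inner_add_right inner_diff_left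
      inner_diff_right inner_commute)

lemma infdist_less_imp_dist_less:
  assumes "infdist x A < r" "A \<noteq> {}"
  obtains a where "a \<in> A" "dist x a < r"
proof -
  have "(INF a\<in>A. dist x a) < r" using assms by (simp add: infdist_notempty)
  then show ?thesis
    using that assms(2) by (subst (asm) cINF_less_iff) (auto intro: bdd_belowI[where m = 0])
qed

lemma Cauchy_if_norm_diff_sq_le:
  fixes y :: "nat \<Rightarrow> 'a::real_normed_vector"
  assumes close: "\<And>k m. norm (y k - y m)^2 \<le> e k + e m" and "e \<longlonglongrightarrow> 0"
  shows "Cauchy y"
proof (rule CauchyI)
  fix r :: real
  assume "r > 0"
  then obtain M where M: "\<And>k. k \<ge> M \<Longrightarrow> \<bar>e k\<bar> < r^2 / 2"
    using LIMSEQ_D[OF \<open>e \<longlonglongrightarrow> 0\<close>, of "r^2 / 2"] by auto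
  have "norm (y m - y n) < r" if "m \<ge> M" "n \<ge> M" for m n
  proof -
    have "norm (y m - y n)^2 < r^2"
      using close[of m n] M[OF that(1)] M[OF that(2)] by linarith
    then show ?thesis using \<open>r > 0\<close> by (simp add: power2_less_imp_less)
  qed
  then show "\<exists>M. \<forall>m\<ge>M. \<forall>n\<ge>M. norm (y m - y n) < r" by blast
qed

lemma convex_near_points_close:
  fixes C :: "'a::real_inner set"
  assumes "convex C" "y \<in> C" "y' \<in> C"
    and dist_ge: "\<And>c. c \<in> C \<Longrightarrow> d \<le> norm (u - c)" and "0 \<le> d"
  shows "norm (y - y')^2 + 4 * d^2 \<le> 2 * norm (u - y)^2 + 2 * norm (u - y')^2"
proof -
  have "(1/2) *\<^sub>R y + (1/2) *\<^sub>R y' \<in> C"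
    using assms(1-3) by (intro convexD) auto
  then have "d \<le> norm (u - ((1/2) *\<^sub>R y + (1/2) *\<^sub>R y'))"
    by (rule dist_ge)
  also have "u - ((1/2) *\<^sub>R y + (1/2) *\<^sub>R y') = (1/2) *\<^sub>R ((u - y) + (u - y'))"
    by (simp add: algebra_simps flip: scaleR_add_left)
  finally have "2 * d \<le> norm ((u - y) + (u - y'))"
    by simp
  then have "4 * d^2 \<le> norm ((u - y) + (u - y'))^2"
    using \<open>0 \<le> d\<close> power_mono[of "2 * d", where n = 2] by (simp add: power_mult_distrib)
  moreover have "norm ((u - y) - (u - y'))^2 = norm (y - y')^2"
    by (simp add: norm_minus_commute)
  ultimately show ?thesis
    using parallelogram_law[of "u - y" "u - y'"] by linarith
qed

lemma closed_convex_nearest_point: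
  fixes C :: "'a::{real_inner,complete_space} set"
  assumes "convex C" "closed C" "C \<noteq> {}"
  obtains p where "p \<in> C" "\<And>y. y \<in> C \<Longrightarrow> norm (u - p) \<le> norm (u - y)"
proof -
  define d where "d = infdist u C"
  define e where "e k = inverse (real (Suc k))" for k
  have "0 \<le> d" by (simp add: d_def infdist_nonneg)
  have d_le: "d \<le> norm (u - y)" if "y \<in> C" for y
    using infdist_le[OF that, of u] by (simp add: d_def dist_norm)
  have "\<exists>y\<in>C. norm (u - y)^2 < d^2 + e k" for k
  proof -
    have "d < sqrt (d^2 + e k)"
      using \<open>0 \<le> d\<close> by (intro real_less_rsqrt) (simp add: e_def)
    then obtain y where "y \<in> C" "norm (u - y) < sqrt (d^2 + e k)"
      using infdist_less_imp_dist_less[OF _ assms(3)] by (metis d_def dist_norm)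
    then show ?thesis
      by (metis norm_ge_zero real_sqrt_less_iff real_sqrt_pow2 real_sqrt_power)
  qed
  then obtain y where y_in: "\<And>k. y k \<in> C" and y_near: "\<And>k. norm (u - y k)^2 < d^2 + e k"
    by metis
  have "Cauchy y"
  proof (rule Cauchy_if_norm_diff_sq_le)
    show "norm (y k - y m)^2 \<le> 2 * e k + 2 * e m" for k m
      using convex_near_points_close[OF assms(1) y_in[of k] y_in[of m] d_le \<open>0 \<le> d\<close>]
        y_near[of k] y_near[of m] by linarith
    show "(\<lambda>k. 2 * e k) \<longlonglongrightarrow> 0"
      unfolding e_def using tendsto_mult_right_zero[OF LIMSEQ_inverse_real_of_nat] by simp
  qed
  then obtain p where lim: "y \<longlonglongrightarrow> p"
    using Cauchy_convergent_iff convergent_def by blast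
  have "p \<in> C" using closed_sequentially[OF assms(2) _ lim] y_in by blast
  moreover have "norm (u - p) \<le> d"
  proof -
    have "(\<lambda>k. norm (u - y k)^2) \<longlonglongrightarrow> norm (u - p)^2"
      by (intro tendsto_intros lim)
    moreover have "(\<lambda>k. d^2 + e k) \<longlonglongrightarrow> d^2"
      unfolding e_def using tendsto_add[OF tendsto_const LIMSEQ_inverse_real_of_nat] by simp
    ultimately have "norm (u - p)^2 \<le> d^2"
      using y_near by (intro LIMSEQ_le) (auto intro: less_imp_le)
    then show ?thesis using \<open>0 \<le> d\<close> by (rule power2_le_imp_le)
  qed
  ultimately show ?thesis using that d_le by fastforce
qed

lemma nearest_point_orthogonal:
  fixes N :: "'a::real_inner set"
  assumes "subspace N" "p \<in> N" and nearest: "\<And>y. y \<in> N \<Longrightarrow> norm (u - p) \<le> norm (u - y)"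
    and "z \<in> N"
  shows "inner (u - p) z = 0"
proof (cases "z = 0")
  case False
  define w where "w = u - p"
  define c where "c = inner w z"
  have descent: "2 * t * c \<le> t^2 * inner z z" for t :: real
  proof -
    have "p + t *\<^sub>R z \<in> N" using assms by (simp add: subspace_add subspace_scale)
    then have "norm w^2 \<le> norm (w - t *\<^sub>R z)^2"
      using nearest by (simp add: w_def diff_diff_eq power_mono)
    also have "\<dots> = norm w^2 - 2 * t * c + t^2 * inner z z"
      unfolding power2_norm_eq_inner by (simp add: c_def inner_diff_left inner_diff_right
          inner_commute power2_eq_square algebra_simps)
    finally show ?thesis by linarith
  qed
  have "inner z z > 0" using False by simp
  with descent[of "c / inner z z"] have "c^2 \<le> 0"
    by (simp add: power2_eq_square field_simps)
  then show ?thesis by (simp add: c_def w_def)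
qed simp

lemma pointwise_bounded_imp_locally_bounded:
  fixes a :: "nat \<Rightarrow> 'a::{real_inner,complete_space}"
  assumes "closed V" "V \<noteq> {}"
    and bounded: "\<And>v. v \<in> V \<Longrightarrow> \<exists>C. \<forall>n. \<bar>inner (a n) v\<bar> \<le> C"
  obtains k v0 r where "r > 0" "v0 \<in> V"
    "\<And>w n. w \<in> V \<Longrightarrow> dist v0 w < r \<Longrightarrow> \<bar>inner (a n) w\<bar> \<le> k"
proof -
  define X where "X = top_of_set V"
  define F where "F k = {v\<in>V. \<forall>n. \<bar>inner (a n) v\<bar> \<le> real k}" for k :: nat
  have "completely_metrizable_space X"
    unfolding X_def using assms(1) completely_metrizable_space_closedin
      completely_metrizable_space_euclidean closed_closedin by blast
  moreover have "closedin X (F k)" for k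
  proof -
    have "closed {v. \<forall>n. \<bar>inner (a n) v\<bar> \<le> real k}"
      unfolding Collect_all_eq by (intro closed_INT ballI closed_Collect_le continuous_intros)
    then show ?thesis
      unfolding X_def F_def by (simp add: closedin_closed_Int Collect_conj_eq Int_commute)
  qed
  moreover have "\<Union>(range F) = V"
  proof (intro equalityI subsetI)
    fix v
    assume "v \<in> V"
    then obtain C where "\<forall>n. \<bar>inner (a n) v\<bar> \<le> C" using bounded by blast
    then have "v \<in> F (nat \<lceil>C\<rceil>)"
      using \<open>v \<in> V\<close> unfolding F_def by (auto intro: order_trans[OF _ real_nat_ceiling_ge])
    then show "v \<in> \<Union>(range F)" by blast
  qed (auto simp: F_def)
  moreover have "X interior_of V \<noteq> {}"
    using assms(2) interior_of_topspace[of X] by (simp add: X_def)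
  ultimately obtain k where "X interior_of F k \<noteq> {}"
    using Baire_category_alt[of X "range F"] by auto
  then obtain v0 U where "openin X U" "v0 \<in> U" "U \<subseteq> F k"
    unfolding interior_of_def by blast
  then obtain B where "open B" "U = V \<inter> B" "v0 \<in> B"
    unfolding X_def openin_open by blast
  then obtain r where "r > 0" "ball v0 r \<subseteq> B"
    using open_contains_ball by blast
  show ?thesis
  proof
    show "v0 \<in> V" using \<open>v0 \<in> U\<close> \<open>U = V \<inter> B\<close> by blast
    show "\<bar>inner (a n) w\<bar> \<le> real k" if "w \<in> V" "dist v0 w < r" for w n
    proof -
      have "w \<in> U" using that \<open>ball v0 r \<subseteq> B\<close> \<open>U = V \<inter> B\<close> by auto
      then show ?thesis using \<open>U \<subseteq> F k\<close> by (auto simp: F_def)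
    qed
  qed (rule \<open>r > 0\<close>)
qed

lemma uniform_boundedness_inner:
  fixes a :: "nat \<Rightarrow> 'a::{real_inner,complete_space}"
  assumes "subspace V" "closed V"
    and bounded: "\<And>v. v \<in> V \<Longrightarrow> \<exists>C. \<forall>n. \<bar>inner (a n) v\<bar> \<le> C"
  obtains M where "\<And>n v. v \<in> V \<Longrightarrow> \<bar>inner (a n) v\<bar> \<le> M * norm v"
proof -
  have "V \<noteq> {}" using assms(1) subspace_0 by blast
  then obtain k v0 r where "r > 0" "v0 \<in> V"
    and near: "\<And>w n. w \<in> V \<Longrightarrow> dist v0 w < r \<Longrightarrow> \<bar>inner (a n) w\<bar> \<le> k"
    using pointwise_bounded_imp_locally_bounded[OF assms(2) _ bounded] by metis
  have small: "\<bar>inner (a n) w\<bar> \<le> 2 * k" if "w \<in> V" "norm w < r" for w n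
  proof -
    have "\<bar>inner (a n) (v0 + w)\<bar> \<le> k"
      using that \<open>v0 \<in> V\<close> assms(1) by (intro near) (auto simp: subspace_add dist_norm)
    moreover have "\<bar>inner (a n) v0\<bar> \<le> k" using \<open>v0 \<in> V\<close> \<open>r > 0\<close> by (intro near) auto
    ultimately show ?thesis by (simp add: inner_add_right)
  qed
  have "\<bar>inner (a n) v\<bar> \<le> 4 * k / r * norm v" if "v \<in> V" for n v
  proof (cases "v = 0")
    case False
    define c where "c = r / (2 * norm v)"
    have "c > 0" using \<open>r > 0\<close> False by (simp add: c_def)
    have "c *\<^sub>R v \<in> V" "norm (c *\<^sub>R v) < r"
      using assms(1) that \<open>r > 0\<close> False by (auto simp: c_def subspace_scale)
    then have "c * \<bar>inner (a n) v\<bar> \<le> 2 * k"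
      using small \<open>c > 0\<close> by (fastforce simp: abs_mult)
    then show ?thesis
      using \<open>c > 0\<close> \<open>r > 0\<close> False by (simp add: c_def field_simps)
  qed simp
  then show ?thesis using that by blast
qed

lemma lipschitz_on_if_bounded_additive:
  fixes l :: "'a::real_normed_vector \<Rightarrow> real"
  assumes "subspace V"
    and diff: "\<And>v w. v \<in> V \<Longrightarrow> w \<in> V \<Longrightarrow> l (v - w) = l v - l w"
    and bounded: "\<And>v. v \<in> V \<Longrightarrow> \<bar>l v\<bar> \<le> M * norm v"
  shows "\<bar>M\<bar>-lipschitz_on V l"
proof (rule lipschitz_onI)
  show "dist (l v) (l w) \<le> \<bar>M\<bar> * dist v w" if "v \<in> V" "w \<in> V" for v w
    using bounded[of "v - w"] diff[OF that] that assms(1)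
    by (simp add: dist_norm subspace_diff) (smt (verit) mult_right_mono norm_ge_zero)
qed simp

lemma riesz_representation_closed_subspace:
  fixes l :: "'a::{real_inner,complete_space} \<Rightarrow> real"
  assumes "subspace V" "closed V"
    and add: "\<And>v w. v \<in> V \<Longrightarrow> w \<in> V \<Longrightarrow> l (v + w) = l v + l w"
    and scale: "\<And>c v. v \<in> V \<Longrightarrow> l (c *\<^sub>R v) = c * l v"
    and bounded: "\<And>v. v \<in> V \<Longrightarrow> \<bar>l v\<bar> \<le> M * norm v"
  obtains b where "\<And>v. v \<in> V \<Longrightarrow> l v = inner b v"
proof (cases "\<forall>v\<in>V. l v = 0")
  case True
  then show ?thesis using that[of 0] by simp
next
  case False
  then obtain u where "u \<in> V" "l u \<noteq> 0" by blast
  have diff: "l (v - w) = l v - l w" if "v \<in> V" "w \<in> V" for v w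
    using add[of v "(-1) *\<^sub>R w"] scale[of w "-1"] that assms(1) subspace_neg[of V w]
    by simp
  define N where "N = {v \<in> V. l v = 0}"
  have "subspace N"
    using assms(1) add scale scale[of 0 0] unfolding subspace_def N_def by auto
  have "\<bar>M\<bar>-lipschitz_on V l"
    using assms(1) diff bounded by (rule lipschitz_on_if_bounded_additive)
  then have "closed N"
    unfolding N_def using assms(2) lipschitz_on_continuous_on continuous_closed_preimage_constant
    by blast
  obtain p where "p \<in> N" and nearest: "\<And>y. y \<in> N \<Longrightarrow> norm (u - p) \<le> norm (u - y)"
    using closed_convex_nearest_point[OF subspace_imp_convex[OF \<open>subspace N\<close>] \<open>closed N\<close>]
      \<open>subspace N\<close> subspace_0 by blast
  define z where "z = u - p"
  have "z \<in> V" "l z = l u"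
    using \<open>p \<in> N\<close> \<open>u \<in> V\<close> assms(1) diff by (auto simp: z_def N_def subspace_diff)
  then have "inner z z > 0" using \<open>l u \<noteq> 0\<close> scale[of 0 0] assms(1) by auto
  have "l v = inner ((l z / inner z z) *\<^sub>R z) v" if "v \<in> V" for v
  proof -
    define y where "y = v - (l v / l z) *\<^sub>R z"
    have "y \<in> N"
      using that \<open>z \<in> V\<close> \<open>l z = l u\<close> \<open>l u \<noteq> 0\<close> diff scale assms(1)
      by (simp add: y_def N_def subspace_diff subspace_scale)
    then have "inner z y = 0"
      using nearest_point_orthogonal[OF \<open>subspace N\<close> \<open>p \<in> N\<close> nearest] by (simp add: z_def)
    then show ?thesis
      using \<open>inner z z > 0\<close> \<open>l z = l u\<close> \<open>l u \<noteq> 0\<close>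
      by (simp add: y_def inner_diff_right field_simps)
  qed
  then show ?thesis using that by blast
qed

lemma weak_limit_representation:
  fixes a :: "nat \<Rightarrow> 'a::{real_inner,complete_space}"
  assumes "subspace (\<phi> ` D)" "closed (\<phi> ` D)"
    and lim: "\<And>g. g \<in> D \<Longrightarrow> (\<lambda>n. inner (a n) (\<phi> g)) \<longlonglongrightarrow> c g"
  shows "\<exists>b. \<forall>g\<in>D. c g = inner b (\<phi> g)"
proof -
  define V where "V = \<phi> ` D"
  define l where "l v = lim (\<lambda>n. inner (a n) v)" for v
  have lim_l: "(\<lambda>n. inner (a n) v) \<longlonglongrightarrow> l v" if "v \<in> V" for v
    using that lim unfolding V_def l_def by (metis convergentI convergent_LIMSEQ_iff imageE)
  obtain M where M: "\<And>n v. v \<in> V \<Longrightarrow> \<bar>inner (a n) v\<bar> \<le> M * norm v"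
  proof (rule uniform_boundedness_inner)
    show "\<exists>C. \<forall>n. \<bar>inner (a n) v\<bar> \<le> C" if "v \<in> V" for v
      using convergent_imp_Bseq[OF convergentI[OF lim_l[OF that]]] unfolding Bseq_def by auto
  qed (use assms in \<open>auto simp: V_def\<close>)
  have "l (v + w) = l v + l w" if "v \<in> V" "w \<in> V" for v w
    using tendsto_add[OF lim_l[OF that(1)] lim_l[OF that(2)]] lim_l[of "v + w"] that assms(1)
    by (auto simp: V_def inner_add_right subspace_add intro: LIMSEQ_unique)
  moreover have "l (r *\<^sub>R v) = r * l v" if "v \<in> V" for r v
    using tendsto_mult_left[OF lim_l[OF that], of r] lim_l[of "r *\<^sub>R v"] that assms(1)
    by (auto simp: V_def subspace_scale intro: LIMSEQ_unique)
  moreover have "\<bar>l v\<bar> \<le> M * norm v" if "v \<in> V" for v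
    using tendsto_rabs[OF lim_l[OF that]] M[OF that] by (intro LIMSEQ_le_const2) auto
  ultimately obtain b where "\<And>v. v \<in> V \<Longrightarrow> l v = inner b v"
    using riesz_representation_closed_subspace[of V l M] assms unfolding V_def by metis
  moreover have "c g = l (\<phi> g)" if "g \<in> D" for g
    using LIMSEQ_unique[OF lim[OF that] lim_l] that by (simp add: V_def)
  ultimately show ?thesis by (auto simp: V_def)
qed

section \<open>The complex structure\<close>

lemma inner_iunit_left: "inner (iunit x) y = - inner x (iunit y)"
  using iunit_inner[of "iunit x" y] by (simp add: iunit_iunit)

lemma Re_cinner [simp]: "Re (cinner x y) = inner x y"
  by (simp add: cinner_def)

lemma cinner_commute: "cinner y x = cnj (cinner x y)"
proof -
  have "inner y (iunit x) = - inner x (iunit y)"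
    by (metis inner_commute inner_iunit_left)
  then show ?thesis by (simp add: cinner_def complex_eq_iff inner_commute)
qed

lemma cscale_of_real: "cscale (complex_of_real r) x = r *\<^sub>R x"
  by (simp add: cscale_def)

lemma cscale_imaginary_unit: "cscale \<i> x = iunit x"
  by (simp add: cscale_def)

lemma cscale_zero [simp]: "cscale c (0::'a::chilbert_space) = 0"
  using iunit_scaleR[of 0 "0::'a"] by (simp add: cscale_def)

lemma clinear_on_scaleR:
  assumes "clinear_on D A" "x \<in> D"
  shows "r *\<^sub>R x \<in> D" "A (r *\<^sub>R x) = r *\<^sub>R A x"
  using assms unfolding clinear_on_def csubspace_def by (metis cscale_of_real)+

lemma clinear_on_iunit:
  assumes "clinear_on D A" "x \<in> D"
  shows "iunit x \<in> D" "A (iunit x) = iunit (A x)"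
  using assms unfolding clinear_on_def csubspace_def by (metis cscale_imaginary_unit)+

lemma clinear_on_zero:
  assumes "clinear_on D A"
  shows "A 0 = 0"
  using clinear_on_scaleR(2)[OF assms, of 0 0] assms by (simp add: clinear_on_def csubspace_def)

lemma subspace_graph:
  assumes "clinear_on D A"
  shows "subspace (graph D A)"
proof -
  have "0 \<in> D" "\<And>x y. x \<in> D \<Longrightarrow> y \<in> D \<Longrightarrow> x + y \<in> D \<and> A (x + y) = A x + A y"
    using assms unfolding clinear_on_def csubspace_def by auto
  then show ?thesis
    using clinear_on_zero[OF assms]
      clinear_on_scaleR[OF assms] unfolding subspace_def graph_def zero_prod_def by force
qed

lemma clinear_on_kernel:
  assumes "clinear_on D A" "clinear_on D B"
  shows "clinear_on {x \<in> D. B x = 0} A"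
  using assms clinear_on_zero[OF assms(2)] unfolding clinear_on_def csubspace_def by auto

lemma adjoint_graph_iff_real:
  assumes "clinear_on D A"
  shows "(y, z) \<in> adjoint_graph D A \<longleftrightarrow> (\<forall>x\<in>D. inner (A x) y = inner x z)"
proof
  assume real: "\<forall>x\<in>D. inner (A x) y = inner x z"
  have "cinner (A x) y = cinner x z" if "x \<in> D" for x
  proof -
    have "inner (A (iunit x)) y = inner (iunit x) z"
      using real clinear_on_iunit(1)[OF assms that] by blast
    then have "inner (A x) (iunit y) = inner x (iunit z)"
      by (simp add: clinear_on_iunit(2)[OF assms that] inner_iunit_left)
    then show ?thesis
      using real that by (simp add: cinner_def)
  qed
  then show "(y, z) \<in> adjoint_graph D A" by (simp add: adjoint_graph_def)
qed (simp add: adjoint_graph_def flip: Re_cinner)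

section \<open>Green's identity\<close>

definition boundary_form :: "'g::real_inner \<times> 'g \<Rightarrow> 'g \<times> 'g \<Rightarrow> real" where
  "boundary_form p q = inner (snd p) (fst q) - inner (fst p) (snd q)"

lemma boundary_form_eq_inner: "boundary_form p q = inner (snd p, - fst p) q"
  by (simp add: boundary_form_def inner_prod_def)

lemma inner_eq_boundary_form: "inner b q = boundary_form (- snd b, fst b) q"
  by (simp add: boundary_form_def inner_prod_def)

lemma boundary_form_antisym: "boundary_form p q = - boundary_form q p"
  by (simp add: boundary_form_def inner_commute)

lemma boundary_form_diff_left: "boundary_form (p - p') q = boundary_form p q - boundary_form p' q"
  by (simp add: boundary_form_def inner_diff_left)

lemma boundary_form_nondegenerate:
  fixes w :: "'g::real_inner \<times> 'g"
  assumes "closure Q = UNIV" and "\<And>q. q \<in> Q \<Longrightarrow> boundary_form w q = 0"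
  shows "w = 0"
proof -
  have "closed {q. boundary_form w q = 0}"
    unfolding boundary_form_eq_inner by (intro closed_Collect_eq continuous_intros)
  then have "closure Q \<subseteq> {q. boundary_form w q = 0}"
    using assms(2) by (intro closure_minimal) auto
  then have "boundary_form w (snd w, - fst w) = 0" using assms(1) by blast
  then show ?thesis
    by (simp add: boundary_form_eq_inner inner_prod_def prod_eq_iff)
      (metis add_nonneg_eq_0_iff inner_ge_zero inner_eq_zero_iff)
qed

lemma graph_eq_image: "graph D A = (\<lambda>x. (x, A x)) ` D"
  by (auto simp: graph_def)

locale green_identity =
  fixes dT :: "'a::{real_inner,complete_space} set" and T :: "'a \<Rightarrow> 'a"
    and dT' :: "'a set" and T' :: "'a \<Rightarrow> 'a"
    and \<Gamma> :: "'a \<Rightarrow> 'g::{real_inner,complete_space} \<times> 'g" and \<Gamma>' :: "'a \<Rightarrow> 'g \<times> 'g"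
  assumes green: "\<And>f g. f \<in> dT \<Longrightarrow> g \<in> dT' \<Longrightarrow>
    inner (T f) g - inner f (T' g) = boundary_form (\<Gamma> f) (\<Gamma>' g)"
begin

text \<open>The pair (f, f') behaves towards dom T' like an element of the graph of T with boundary
  value w.\<close>

definition green_compatible :: "'g \<times> 'g \<Rightarrow> 'a \<Rightarrow> 'a \<Rightarrow> bool" where
  "green_compatible w f f' \<longleftrightarrow>
     (\<forall>g\<in>dT'. inner f' g - inner f (T' g) = boundary_form w (\<Gamma>' g))"

lemma green_compatible_boundary_value: "f \<in> dT \<Longrightarrow> green_compatible (\<Gamma> f) f (T f)"
  by (simp add: green_compatible_def green)

lemma green_compatible_diff:
  assumes "green_compatible w f f'" "green_compatible v h h'"
  shows "green_compatible (w - v) (f - h) (f' - h')"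
  unfolding green_compatible_def
proof
  fix g assume "g \<in> dT'"
  then have "inner f' g - inner f (T' g) = boundary_form w (\<Gamma>' g)"
    "inner h' g - inner h (T' g) = boundary_form v (\<Gamma>' g)"
    using assms by (auto simp: green_compatible_def)
  then show "inner (f' - h') g - inner (f - h) (T' g) = boundary_form (w - v) (\<Gamma>' g)"
    unfolding inner_diff_left boundary_form_diff_left by linarith
qed

lemma green_compatible_of_closure:
  assumes "\<Gamma>' ` dT' = UNIV" and "(f, f') \<in> closure (graph dT T)"
  obtains w where "green_compatible w f f'"
proof -
  obtain x where x: "\<And>n. x n \<in> graph dT T" and "x \<longlonglongrightarrow> (f, f')"
    using assms(2) unfolding closure_sequential by blast
  define h where "h n = fst (x n)" for n
  have h: "h n \<in> dT" "x n = (h n, T (h n))" for n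
    using x[of n] by (auto simp: h_def graph_def)
  define a where "a n = (snd (\<Gamma> (h n)), - fst (\<Gamma> (h n)))" for n
  have lim: "(\<lambda>n. inner (a n) (\<Gamma>' g)) \<longlonglongrightarrow> inner f' g - inner f (T' g)" if "g \<in> dT'" for g
  proof -
    have "(\<lambda>n. fst (x n)) \<longlonglongrightarrow> f" "(\<lambda>n. snd (x n)) \<longlonglongrightarrow> f'"
      using tendsto_fst[OF \<open>x \<longlonglongrightarrow> (f, f')\<close>] tendsto_snd[OF \<open>x \<longlonglongrightarrow> (f, f')\<close>] by simp_all
    then have "(\<lambda>n. inner (snd (x n)) g - inner (fst (x n)) (T' g)) \<longlonglongrightarrow> inner f' g - inner f (T' g)"
      by (intro tendsto_intros)
    moreover have "inner (a n) (\<Gamma>' g) = inner (snd (x n)) g - inner (fst (x n)) (T' g)" for n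
      using green[OF h(1) that] h(2) by (simp add: a_def boundary_form_eq_inner)
    ultimately show ?thesis by simp
  qed
  have "subspace (\<Gamma>' ` dT')" "closed (\<Gamma>' ` dT')" using assms(1) by simp_all
  then have "\<exists>b. \<forall>g\<in>dT'. inner f' g - inner f (T' g) = inner b (\<Gamma>' g)"
    using lim by (rule weak_limit_representation)
  then obtain b where "\<And>g. g \<in> dT' \<Longrightarrow> inner f' g - inner f (T' g) = inner b (\<Gamma>' g)"
    by blast
  then have "green_compatible (- snd b, fst b) f f'"
    by (simp add: green_compatible_def inner_eq_boundary_form)
  then show ?thesis by (rule that)
qed

lemma green_compatible_of_boundary_value:
  assumes "closure (\<Gamma> ` dT) = UNIV" "subspace (graph dT' T')" "closed (graph dT' T')"
  obtains f f' where "green_compatible w f f'"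
proof -
  obtain x where x: "\<And>n. x n \<in> \<Gamma> ` dT" and "x \<longlonglongrightarrow> w"
    using assms(1) closure_sequential by blast
  then have "\<forall>n. \<exists>y. y \<in> dT \<and> x n = \<Gamma> y" by blast
  then obtain h where h: "\<And>n. h n \<in> dT" "\<And>n. x n = \<Gamma> (h n)" by metis
  define a where "a n = (T (h n), - h n)" for n
  have lim: "(\<lambda>n. inner (a n) (g, T' g)) \<longlonglongrightarrow> boundary_form w (\<Gamma>' g)" if "g \<in> dT'" for g
  proof -
    have "(\<lambda>n. boundary_form (x n) (\<Gamma>' g)) \<longlonglongrightarrow> boundary_form w (\<Gamma>' g)"
      unfolding boundary_form_def using \<open>x \<longlonglongrightarrow> w\<close> by (intro tendsto_intros)
    moreover have "inner (a n) (g, T' g) = boundary_form (x n) (\<Gamma>' g)" for n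
      using green[OF h(1) that] h(2) by (simp add: a_def inner_prod_def)
    ultimately show ?thesis by simp
  qed
  have "\<exists>b. \<forall>g\<in>dT'. boundary_form w (\<Gamma>' g) = inner b (g, T' g)"
    using assms(2,3) lim unfolding graph_eq_image by (rule weak_limit_representation)
  then obtain b where "\<And>g. g \<in> dT' \<Longrightarrow> boundary_form w (\<Gamma>' g) = inner b (g, T' g)"
    by blast
  then have "green_compatible w (- snd b) (fst b)"
    by (simp add: green_compatible_def inner_prod_def)
  then show ?thesis by (rule that)
qed

text \<open>The hypothesis adjoint_kernel is the real form of the inclusion in condition (M):
  the adjoint of T' restricted to the kernel of the first component of \<Gamma>' is contained in T.\<close>

lemma graph_mem_if_green_compatible:
  assumes "\<Gamma> ` dT = UNIV" "subspace (graph dT T)"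
    and adjoint_kernel: "\<And>y z. (\<forall>g\<in>dT'. fst (\<Gamma>' g) = 0 \<longrightarrow> inner (T' g) y = inner g z) \<Longrightarrow>
      (y, z) \<in> graph dT T"
    and "green_compatible w f f'"
  shows "(f, f') \<in> graph dT T"
proof -
  obtain h where "h \<in> dT" "\<Gamma> h = w" using assms(1) by (metis UNIV_I imageE)
  then have "green_compatible 0 (f - h) (f' - T h)"
    using green_compatible_diff[OF assms(4) green_compatible_boundary_value] by fastforce
  then have "(f - h, f' - T h) \<in> graph dT T"
    by (intro adjoint_kernel) (simp add: green_compatible_def boundary_form_def inner_commute)
  moreover have "(h, T h) \<in> graph dT T" using \<open>h \<in> dT\<close> by (simp add: graph_def)
  ultimately show ?thesis using subspace_add[OF assms(2)] by fastforce
qed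

lemma boundary_value_unique:
  assumes "closure (\<Gamma>' ` dT') = UNIV" "f \<in> dT" "green_compatible w f (T f)"
  shows "\<Gamma> f = w"
proof -
  have "green_compatible (\<Gamma> f - w) 0 0"
    using green_compatible_diff[OF green_compatible_boundary_value[OF assms(2)] assms(3)] by simp
  then have "\<Gamma> f - w = 0"
    using assms(1) by (intro boundary_form_nondegenerate) (auto simp: green_compatible_def)
  then show ?thesis by simp
qed

lemma boundary_value_zero_if_symmetric:
  assumes "closure (\<Gamma> ` dT) = UNIV" "g \<in> dT'" "\<And>f. f \<in> dT \<Longrightarrow> inner (T f) g = inner f (T' g)"
  shows "\<Gamma>' g = 0"
proof (rule boundary_form_nondegenerate[OF assms(1)])
  fix q assume "q \<in> \<Gamma> ` dT"
  then obtain f where "f \<in> dT" "q = \<Gamma> f" by blast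
  then show "boundary_form (\<Gamma>' g) q = 0"
    using green[of f g] assms(2,3) boundary_form_antisym[of "\<Gamma>' g"] by simp
qed

lemma closed_graph_if_boundary_maps_surjective:
  assumes "\<Gamma> ` dT = UNIV" "\<Gamma>' ` dT' = UNIV" "subspace (graph dT T)"
    and "\<And>y z. (\<forall>g\<in>dT'. fst (\<Gamma>' g) = 0 \<longrightarrow> inner (T' g) y = inner g z) \<Longrightarrow> (y, z) \<in> graph dT T"
  shows "closed (graph dT T)"
proof -
  have "closure (graph dT T) \<subseteq> graph dT T"
  proof (clarify)
    fix f f' assume "(f, f') \<in> closure (graph dT T)"
    then obtain w where "green_compatible w f f'"
      using green_compatible_of_closure assms(2) by blast
    then show "(f, f') \<in> graph dT T"
      using graph_mem_if_green_compatible assms(1,3,4) by blast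
  qed
  then show ?thesis using closure_subset_eq by blast
qed

lemma boundary_map_surjective_if_maximal:
  assumes "closure (\<Gamma> ` dT) = UNIV" "closure (\<Gamma>' ` dT') = UNIV"
    and "subspace (graph dT' T')" "closed (graph dT' T')"
    and maximal: "\<And>f f'. (\<forall>g\<in>dS. inner (S g) f = inner g f') \<Longrightarrow> f \<in> dT \<and> T f = f'"
    and minimal: "graph dS S \<subseteq> graph dT' T'"
    and symmetric: "\<And>f g. f \<in> dT \<Longrightarrow> g \<in> dS \<Longrightarrow> inner (S g) f = inner g (T f)"
  shows "\<Gamma> ` dT = UNIV"
proof -
  have "w \<in> \<Gamma> ` dT" for w
  proof -
    obtain f f' where compatible: "green_compatible w f f'"
      using green_compatible_of_boundary_value assms(1,3,4) by blast
    have "inner (S g) f = inner g f'" if "g \<in> dS" for g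
    proof -
      have "g \<in> dT'" "T' g = S g" using minimal that by (auto simp: graph_def)
      moreover from this have "\<Gamma>' g = 0"
        using that symmetric assms(1)
        by (intro boundary_value_zero_if_symmetric) (auto simp: inner_commute)
      ultimately show ?thesis
        using compatible by (auto simp: green_compatible_def boundary_form_def inner_commute)
    qed
    then have "f \<in> dT \<and> T f = f'" by (intro maximal) blast
    then show ?thesis
      using boundary_value_unique[OF assms(2)] compatible by blast
  qed
  then show ?thesis by blast
qed

end

section \<open>Quasi boundary triples\<close>

lemma adjoint_pair_swap: "adjoint_pair dS S dSt St \<Longrightarrow> adjoint_pair dSt St dS S"
  unfolding adjoint_pair_def by (metis cinner_commute)

lemma quasi_boundary_triple_swap:
  assumes "quasi_boundary_triple dT T dTt Tt G0 G1 Gt0 Gt1"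
  shows "quasi_boundary_triple dTt Tt dT T Gt0 Gt1 G0 G1"
proof -
  have "cinner (Tt g) f - cinner g (T f) = cinner (Gt1 g) (G0 f) - cinner (Gt0 g) (G1 f)"
    if "f \<in> dT" "g \<in> dTt" for f g
  proof -
    have "cinner (T f) g - cinner f (Tt g) = cinner (G1 f) (Gt0 g) - cinner (G0 f) (Gt1 g)"
      using assms that by (simp add: quasi_boundary_triple_def)
    then have "cnj (cinner f (Tt g)) - cnj (cinner (T f) g)
        = cnj (cinner (G0 f) (Gt1 g)) - cnj (cinner (G1 f) (Gt0 g))"
      by (metis complex_cnj_diff minus_diff_eq complex_cnj_minus)
    then show ?thesis by (simp flip: cinner_commute)
  qed
  then show ?thesis using assms by (auto simp: quasi_boundary_triple_def)
qed

lemma quasi_boundary_triple_green_identity: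
  assumes "quasi_boundary_triple dT T dTt Tt G0 G1 Gt0 Gt1"
  shows "green_identity dT T dTt Tt (\<lambda>f. (G0 f, G1 f)) (\<lambda>g. (Gt0 g, Gt1 g))"
proof
  fix f g assume "f \<in> dT" "g \<in> dTt"
  then have "Re (cinner (T f) g - cinner f (Tt g)) = Re (cinner (G1 f) (Gt0 g) - cinner (G0 f) (Gt1 g))"
    using assms by (simp add: quasi_boundary_triple_def)
  then show "inner (T f) g - inner f (Tt g) = boundary_form (G0 f, G1 f) (Gt0 g, Gt1 g)"
    by (simp add: boundary_form_def)
qed

lemma graph_eq_adjoint_if_boundary_maps_surjective:
  assumes core: "core_of_adjoint dT T dS S" and core': "core_of_adjoint dTt Tt dSt St"
    and qbt: "quasi_boundary_triple dT T dTt Tt G0 G1 Gt0 Gt1"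
    and "(\<lambda>f. (G0 f, G1 f)) ` dT = UNIV" "(\<lambda>g. (Gt0 g, Gt1 g)) ` dTt = UNIV"
  shows "graph dT T = adjoint_graph dS S"
proof -
  interpret green_identity dT T dTt Tt "\<lambda>f. (G0 f, G1 f)" "\<lambda>g. (Gt0 g, Gt1 g)"
    using qbt by (rule quasi_boundary_triple_green_identity)
  have "clinear_on dT T" "closure (graph dT T) = adjoint_graph dS S"
    using core by (simp_all add: core_of_adjoint_def linear_operator_def)
  have "clinear_on {g \<in> dTt. Gt0 g = 0} Tt"
    using core' qbt
    by (intro clinear_on_kernel) (simp_all add: core_of_adjoint_def linear_operator_def
        quasi_boundary_triple_def)
  then have "(y, z) \<in> graph dT T"
    if "\<forall>g\<in>dTt. Gt0 g = 0 \<longrightarrow> inner (Tt g) y = inner g z" for y z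
    using that qbt adjoint_graph_iff_real[of "{g \<in> dTt. Gt0 g = 0}" Tt y z]
    by (auto simp: quasi_boundary_triple_def graph_def)
  then have "closed (graph dT T)"
    using assms(4,5) subspace_graph[OF \<open>clinear_on dT T\<close>]
    by (intro closed_graph_if_boundary_maps_surjective) auto
  then show ?thesis
    using \<open>closure (graph dT T) = adjoint_graph dS S\<close> closure_closed by metis
qed

lemma boundary_map_surjective_if_graph_eq_adjoint:
  assumes pair: "adjoint_pair dS S dSt St"
    and core': "core_of_adjoint dTt Tt dSt St"
    and qbt: "quasi_boundary_triple dT T dTt Tt G0 G1 Gt0 Gt1"
    and T_eq: "graph dT T = adjoint_graph dS S"
    and T'_eq: "graph dTt Tt = adjoint_graph dSt St"
  shows "(\<lambda>f. (G0 f, G1 f)) ` dT = UNIV"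
proof -
  interpret green_identity dT T dTt Tt "\<lambda>f. (G0 f, G1 f)" "\<lambda>g. (Gt0 g, Gt1 g)"
    using qbt by (rule quasi_boundary_triple_green_identity)
  have "clinear_on dS S" "clinear_on dSt St"
    and pair_real: "\<And>f g. f \<in> dS \<Longrightarrow> g \<in> dSt \<Longrightarrow> inner (S f) g = inner f (St g)"
    using pair unfolding adjoint_pair_def densely_defined_def linear_operator_def
    by (auto simp flip: Re_cinner)
  have "clinear_on dTt Tt" "closed (graph dTt Tt)"
    using core' T'_eq unfolding core_of_adjoint_def linear_operator_def
    by (simp, metis closed_closure)
  show ?thesis
  proof (rule boundary_map_surjective_if_maximal)
    show "closure ((\<lambda>f. (G0 f, G1 f)) ` dT) = UNIV" "closure ((\<lambda>g. (Gt0 g, Gt1 g)) ` dTt) = UNIV"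
      using qbt by (simp_all add: quasi_boundary_triple_def)
    show "subspace (graph dTt Tt)" by (rule subspace_graph) fact
    show "closed (graph dTt Tt)" by fact
    show "f \<in> dT \<and> T f = f'" if "\<forall>g\<in>dS. inner (S g) f = inner g f'" for f f'
    proof -
      have "(f, f') \<in> graph dT T"
        using that adjoint_graph_iff_real[OF \<open>clinear_on dS S\<close>] T_eq by simp
      then show ?thesis by (auto simp: graph_def)
    qed
    show "graph dS S \<subseteq> graph dTt Tt"
      using pair_real adjoint_graph_iff_real[OF \<open>clinear_on dSt St\<close>] T'_eq
      by (auto simp: graph_def inner_commute)
    show "inner (S g) f = inner g (T f)" if "f \<in> dT" "g \<in> dS" for f g
      using that adjoint_graph_iff_real[OF \<open>clinear_on dS S\<close>] T_eq by (auto simp: graph_def)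
  qed
qed

theorem proposition2p6:
  fixes dS dSt dT dTt :: "'a::chilbert_space set"
    and S St T Tt :: "'a \<Rightarrow> 'a"
    and G0 G1 Gt0 Gt1 :: "'a \<Rightarrow> 'g::chilbert_space"
  assumes separable: "\<exists>D::'a set. countable D \<and> closure D = UNIV"
    and pair: "adjoint_pair dS S dSt St"
    and coreT: "core_of_adjoint dT T dS S"
    and coreTt: "core_of_adjoint dTt Tt dSt St"
    and qbt: "quasi_boundary_triple dT T dTt Tt G0 G1 Gt0 Gt1"
  shows "(graph dT T = adjoint_graph dS S \<and> graph dTt Tt = adjoint_graph dSt St)
     \<longleftrightarrow> ((\<lambda>f. (G0 f, G1 f)) ` dT = UNIV \<and> (\<lambda>g. (Gt0 g, Gt1 g)) ` dTt = UNIV)"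
  using boundary_map_surjective_if_graph_eq_adjoint[OF pair coreTt qbt]
    boundary_map_surjective_if_graph_eq_adjoint[OF adjoint_pair_swap[OF pair] coreT
      quasi_boundary_triple_swap[OF qbt]]
    graph_eq_adjoint_if_boundary_maps_surjective[OF coreT coreTt qbt]
    graph_eq_adjoint_if_boundary_maps_surjective[OF coreTt coreT quasi_boundary_triple_swap[OF qbt]]
  by blast

end
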